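(* Let $\mathcal F=(A,X,f)$ and $\mathcal G=(B,X,g)$ be fuzzy automata and let $\varphi:\mathcal F\to\mathcal G$ be an epimorphism. Then $\varphi(\mathcal F(a,w))=\mathcal G(\varphi(a),w)$ for all $a\in A$ and $w\in X^*$.
   Context: A fuzzy automaton is a triple $\mathcal F=(A,X,f)$ with $A$ a finite nonempty set of states, $X$ a finite nonempty alphabet, and $f:A\times X\times A\to[0,1]$, extended to words by $f^*(a,\varepsilon,a)=1$, $f^*(a,\varepsilon,b)=0$ ($b\neq a$), $f^*(a,vx,b)=\max_{c\in A}\min\{f^*(a,v,c),f(c,x,b)\}$ (and similarly $g^*$ for $\mathcal G$). Let $\mathcal F(a,w)=\{b\in A\mid f^*(a,w,b)>0\}$. A mapping $\varphi:A\to B$ is a homomorphism $\mathcal F\to\mathcal G$ if $g(\varphi(a),x,b)=\max\{f(a,x,a')\mid a'\in A,\ \varphi(a')=b\}$ for all $a\in A$, $b\in B$, $x\in X$ (the maximum of the empty set being $0$); it is an epimorphism if it is moreover surjective. *)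

theory Defs
  imports Complex_Main
begin

definition fuzzy_automaton :: "'a set \<Rightarrow> 'x set \<Rightarrow> ('a \<Rightarrow> 'x \<Rightarrow> 'a \<Rightarrow> real) \<Rightarrow> bool" where
  "fuzzy_automaton A X f \<longleftrightarrow> finite A \<and> A \<noteq> {} \<and> finite X \<and> X \<noteq> {} \<and>
     (\<forall>a\<in>A. \<forall>x\<in>X. \<forall>b\<in>A. 0 \<le> f a x b \<and> f a x b \<le> 1)"

text \<open>Auxiliary: extension on the reversed word, so that the recursion
f*(a, v x, b) = max_c min (f*(a,v,c), f(c,x,b)) is structural.\<close>

fun fstar_rev :: "'a set \<Rightarrow> ('a \<Rightarrow> 'x \<Rightarrow> 'a \<Rightarrow> real) \<Rightarrow> 'a \<Rightarrow> 'x list \<Rightarrow> 'a \<Rightarrow> real" where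
  "fstar_rev A f a [] b = (if a = b then 1 else 0)"
| "fstar_rev A f a (x # rv) b = Max ((\<lambda>c. min (fstar_rev A f a rv c) (f c x b)) ` A)"

definition fstar :: "'a set \<Rightarrow> ('a \<Rightarrow> 'x \<Rightarrow> 'a \<Rightarrow> real) \<Rightarrow> 'a \<Rightarrow> 'x list \<Rightarrow> 'a \<Rightarrow> real" where
  "fstar A f a w b = fstar_rev A f a (rev w) b"

lemma fstar_Nil: "fstar A f a [] b = (if a = b then 1 else 0)"
  by (simp add: fstar_def)

lemma fstar_snoc:
  "fstar A f a (v @ [x]) b = Max ((\<lambda>c. min (fstar A f a v c) (f c x b)) ` A)"
  by (simp add: fstar_def)

definition reach :: "'a set \<Rightarrow> ('a \<Rightarrow> 'x \<Rightarrow> 'a \<Rightarrow> real) \<Rightarrow> 'a \<Rightarrow> 'x list \<Rightarrow> 'a set" where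
  "reach A f a w = {b \<in> A. fstar A f a w b > 0}"

definition fa_hom ::
  "'a set \<Rightarrow> 'x set \<Rightarrow> ('a \<Rightarrow> 'x \<Rightarrow> 'a \<Rightarrow> real) \<Rightarrow>
   'b set \<Rightarrow> ('b \<Rightarrow> 'x \<Rightarrow> 'b \<Rightarrow> real) \<Rightarrow> ('a \<Rightarrow> 'b) \<Rightarrow> bool" where
  "fa_hom A X f B g \<phi> \<longleftrightarrow> \<phi> ` A \<subseteq> B \<and>
     (\<forall>a\<in>A. \<forall>b\<in>B. \<forall>x\<in>X.
        g (\<phi> a) x b = (let S = {a'\<in>A. \<phi> a' = b} in
                         if S = {} then 0 else Max ((\<lambda>a'. f a x a') ` S)))"

definition fa_epi ::
  "'a set \<Rightarrow> 'x set \<Rightarrow> ('a \<Rightarrow> 'x \<Rightarrow> 'a \<Rightarrow> real) \<Rightarrow>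
   'b set \<Rightarrow> ('b \<Rightarrow> 'x \<Rightarrow> 'b \<Rightarrow> real) \<Rightarrow> ('a \<Rightarrow> 'b) \<Rightarrow> bool" where
  "fa_epi A X f B g \<phi> \<longleftrightarrow> fa_hom A X f B g \<phi> \<and> \<phi> ` A = B"

end

theory Submission
  imports Defs
begin

text \<open>Only the support of f* matters: a state is reachable under v x iff it is an x-successor
of a state reachable under v. An epimorphism maps the x-successors of a onto the x-successors
of \<phi> a, because g(\<phi> a, x, b) is a maximum over the whole nonempty fibre of b.\<close>

lemma reach_Nil:
  assumes "a \<in> A"
  shows "reach A f a [] = {a}"
  using assms by (auto simp: reach_def fstar_Nil)

lemma reach_snoc:
  assumes "finite A" "A \<noteq> {}"
  shows "reach A f a (v @ [x]) = {b \<in> A. \<exists>c \<in> reach A f a v. 0 < f c x b}"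
  using assms by (auto simp: reach_def fstar_snoc Max_gr_iff)

lemma fa_hom_pos_iff:
  assumes "fa_hom A X f B g \<phi>" "finite A"
    and "a \<in> A" "x \<in> X" "b \<in> \<phi> ` A"
  shows "0 < g (\<phi> a) x b \<longleftrightarrow> (\<exists>a' \<in> A. \<phi> a' = b \<and> 0 < f a x a')"
proof -
  let ?S = "{a' \<in> A. \<phi> a' = b}"
  have "?S \<noteq> {}" "finite ?S" using assms(2,5) by auto
  moreover have "b \<in> B" using assms(1,5) by (auto simp: fa_hom_def)
  ultimately have "g (\<phi> a) x b = Max ((\<lambda>a'. f a x a') ` ?S)"
    using assms(1,3,4) unfolding fa_hom_def Let_def by (simp only: if_False)
  with \<open>?S \<noteq> {}\<close> \<open>finite ?S\<close> show ?thesis by (auto simp: Max_gr_iff)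
qed

lemma fa_epi_image_reach:
  assumes "fa_epi A X f B g \<phi>" "finite A" "A \<noteq> {}"
    and "a \<in> A" "set w \<subseteq> X"
  shows "\<phi> ` reach A f a w = reach B g (\<phi> a) w"
  using assms(5)
proof (induction w rule: rev_induct)
  case Nil
  have "\<phi> a \<in> B" using assms(1,4) by (auto simp: fa_epi_def)
  then show ?case using assms(4) by (simp add: reach_Nil)
next
  case (snoc x v)
  have hom: "fa_hom A X f B g \<phi>" and img: "\<phi> ` A = B"
    using assms(1) by (auto simp: fa_epi_def)
  have "finite B" "B \<noteq> {}" using img assms(2,3) by auto
  have x: "x \<in> X" and IH: "\<phi> ` reach A f a v = reach B g (\<phi> a) v"
    using snoc by auto
  have reach_A: "reach A f a v \<subseteq> A" by (auto simp: reach_def)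
  have "reach B g (\<phi> a) (v @ [x]) = {b \<in> B. \<exists>c \<in> reach A f a v. 0 < g (\<phi> c) x b}"
    unfolding reach_snoc[OF \<open>finite B\<close> \<open>B \<noteq> {}\<close>] IH[symmetric] by blast
  also have "\<dots> = {b \<in> B. \<exists>c \<in> reach A f a v. \<exists>a' \<in> A. \<phi> a' = b \<and> 0 < f c x a'}"
    using fa_hom_pos_iff[OF hom assms(2) _ x] reach_A img by blast
  also have "\<dots> = \<phi> ` reach A f a (v @ [x])"
    unfolding reach_snoc[OF assms(2,3)] img[symmetric] by (auto simp: image_def)
  finally show ?case by simp
qed

theorem lemma6p3:
  fixes A :: "'a set" and B :: "'b set" and X :: "'x set"
    and f :: "'a \<Rightarrow> 'x \<Rightarrow> 'a \<Rightarrow> real" and g :: "'b \<Rightarrow> 'x \<Rightarrow> 'b \<Rightarrow> real"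
    and \<phi> :: "'a \<Rightarrow> 'b"
  assumes "fuzzy_automaton A X f" and "fuzzy_automaton B X g"
    and "fa_epi A X f B g \<phi>"
    and "a \<in> A" and "set w \<subseteq> X"
  shows "\<phi> ` reach A f a w = reach B g (\<phi> a) w"
  using fa_epi_image_reach[OF assms(3) _ _ assms(4,5)] assms(1)
  by (simp add: fuzzy_automaton_def)

end
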